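(* Let $\mathfrak{M}$ denote the set of bounded non-negative measures on the unit circle $\mathbb{T}=\{e^{i\theta}:\theta\in(-\pi,\pi]\}$, and let $\delta$ be a metric on $\mathfrak{M}$. Then the following are equivalent: (i) for every $d\nu\in\mathfrak{M}$, with covariance sequence $c_k=\frac{1}{2\pi}\int_{-\pi}^{\pi}e^{-ik\theta}\,d\nu(\theta)$, $k=0,1,2,\dots$, and every sequence $\epsilon_n>0$ with $\epsilon_n\to 0$, one has $\rho_\delta(\mathcal{F}_{\mathbf{c}_{0:n},\epsilon_n})\to 0$ as $n\to\infty$; (ii) $\delta$ is weakly continuous.
   Context: For $\mathbf{c}_{0:n}=(c_0,\dots,c_n)$ and $\epsilon>0$, the uncertainty set is $\mathcal{F}_{\mathbf{c}_{0:n},\epsilon}=\{d\mu\in\mathfrak{M}: |c_k-\frac{1}{2\pi}\int_{-\pi}^{\pi}e^{-ik\theta}d\mu(\theta)|<\epsilon,\ k=0,1,\dots,n\}$. For a set $\mathcal{F}\subset\mathfrak{M}$, its diameter is $\rho_\delta(\mathcal{F})=\sup\{\delta(d\mu_0,d\mu_1): d\mu_0,d\mu_1\in\mathcal{F}\}$. The weak topology on $\mathfrak{M}$ is the one in which $d\mu_k\to d\mu$ iff $\int f\,d\mu_k\to\int f\,d\mu$ for every real-valued continuous function $f$ on $\mathbb{T}$; $\delta$ is called weakly continuous if $\delta:\mathfrak{M}\times\mathfrak{M}\to\mathbb{R}$ is continuous with respect to the weak topology (in particular $d\mu_k\to d\mu$ weakly implies $\delta(d\mu_k,d\mu)\to0$).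 *)

theory Defs
  imports "HOL-Analysis.Analysis"
begin

text \<open>The unit circle T as a subset of the complex plane; e^{i theta} is identified with z.\<close>
abbreviation circleT :: "complex set" where
  "circleT \<equiv> sphere 0 1"

definition Meas :: "complex measure set" where
  "Meas = {M. sets M = sets (restrict_space borel circleT) \<and> emeasure M (space M) \<noteq> \<infinity>}"

text \<open>Trigonometric moments: (1/2pi) int e^{-ik theta} d mu(theta), with e^{-ik theta} = (cnj z)^k.\<close>
definition moment :: "complex measure \<Rightarrow> nat \<Rightarrow> complex" where
  "moment M k = complex_of_real (1 / (2 * pi)) * (\<integral>z. (cnj z) ^ k \<partial>M)"

definition metric_on_Meas :: "(complex measure \<Rightarrow> complex measure \<Rightarrow> real) \<Rightarrow> bool" where
  "metric_on_Meas d \<longleftrightarrow>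
     (\<forall>a\<in>Meas. \<forall>b\<in>Meas. d a b = 0 \<longleftrightarrow> a = b) \<and>
     (\<forall>a\<in>Meas. \<forall>b\<in>Meas. d a b = d b a) \<and>
     (\<forall>a\<in>Meas. \<forall>b\<in>Meas. \<forall>c\<in>Meas. d a c \<le> d a b + d b c)"

definition uncert :: "(nat \<Rightarrow> complex) \<Rightarrow> nat \<Rightarrow> real \<Rightarrow> complex measure set" where
  "uncert c n \<epsilon> = {M \<in> Meas. \<forall>k\<le>n. cmod (c k - moment M k) < \<epsilon>}"

text \<open>Diameter, taken in the extended reals (so that an unbounded set has diameter infinity).\<close>
definition diam_delta :: "(complex measure \<Rightarrow> complex measure \<Rightarrow> real) \<Rightarrow> complex measure set \<Rightarrow> ereal" where
  "diam_delta d F = (SUP p \<in> F \<times> F. ereal (d (fst p) (snd p)))"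

definition weak_top :: "complex measure topology" where
  "weak_top = topology_generated_by
     {{M \<in> Meas. (\<integral>z. f z \<partial>M) \<in> U} | f U. continuous_on circleT f \<and> open (U :: real set)}"

definition weakly_continuous :: "(complex measure \<Rightarrow> complex measure \<Rightarrow> real) \<Rightarrow> bool" where
  "weakly_continuous d \<longleftrightarrow>
     continuous_map (prod_topology weak_top weak_top) euclideanreal (\<lambda>p. d (fst p) (snd p))"

end

theory Submission
  imports Defs
begin

(* The uncertainty sets around \<nu> form a base of weak neighbourhoods of \<nu>.  They are weakly
   open, since the moments are integrals of the continuous functions cnj z ^ k.  Conversely, by
   Stone-Weierstrass every continuous f on the circle is a uniform limit of polynomials in z and
   cnj z, whose integrals are linear combinations of moments; as the total mass is 2 pi times the
   zeroth moment, it stays bounded on small uncertainty sets, so the integral of f converges along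
   them and every weak neighbourhood of \<nu> contains one.  Hence (i) says that \<delta> \<nu> M \<rightarrow> 0
   as M \<rightarrow> \<nu> weakly, for every \<nu>, which for a metric is equivalent to joint weak continuity
   by the triangle inequality. *)

section \<open>Measures on the circle and their moments\<close>

lemma space_Meas: "M \<in> Meas \<Longrightarrow> space M = circleT"
  using sets_eq_imp_space_eq[of M "restrict_space borel circleT"]
  by (simp add: Meas_def space_restrict_space)

lemma finite_measure_Meas: "M \<in> Meas \<Longrightarrow> finite_measure M"
  by (rule finite_measureI) (simp add: Meas_def)

lemma integrable_Meas_continuous_on:
  fixes f :: "complex \<Rightarrow> 'b::{banach,second_countable_topology}"
  assumes M: "M \<in> Meas" and f: "continuous_on circleT f"
  shows "integrable M f"
proof -
  interpret finite_measure M using M by (rule finite_measure_Meas)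
  have "bounded (f ` circleT)"
    by (intro compact_imp_bounded compact_continuous_image f compact_sphere)
  then obtain B where B: "\<forall>z\<in>circleT. norm (f z) \<le> B"
    by (auto simp: bounded_iff)
  have "f \<in> borel_measurable M"
    using borel_measurable_continuous_on_restrict[OF f] M
    by (simp add: Meas_def cong: measurable_cong_sets)
  with B show ?thesis
    by (intro integrable_const_bound[where B=B]) (auto simp: space_Meas[OF M])
qed

lemma abs_integral_diff_le_uniform:
  fixes f g :: "complex \<Rightarrow> real"
  assumes M: "M \<in> Meas" and f: "continuous_on circleT f" and g: "continuous_on circleT g"
    and fg: "\<And>z. z \<in> circleT \<Longrightarrow> \<bar>f z - g z\<bar> \<le> e"
  shows "\<bar>(\<integral>z. f z \<partial>M) - (\<integral>z. g z \<partial>M)\<bar> \<le> e * measure M (space M)"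
proof -
  interpret finite_measure M using M by (rule finite_measure_Meas)
  have int: "integrable M f" "integrable M g"
    using integrable_Meas_continuous_on[OF M] f g by auto
  have "\<bar>(\<integral>z. f z \<partial>M) - (\<integral>z. g z \<partial>M)\<bar> = \<bar>\<integral>z. f z - g z \<partial>M\<bar>"
    using int by simp
  also have "\<dots> \<le> (\<integral>z. \<bar>f z - g z\<bar> \<partial>M)"
    using integral_norm_bound[of M "\<lambda>z. f z - g z"] by simp
  also have "\<dots> \<le> (\<integral>z. e \<partial>M)"
    using int fg by (intro integral_mono) (auto simp: space_Meas[OF M])
  finally show ?thesis by (simp add: mult.commute)
qed

lemma integral_cnj_power_eq_moment: "(\<integral>z. cnj z ^ k \<partial>M) = of_real (2 * pi) * moment M k"
  by (simp add: moment_def)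

lemma integral_power_eq_moment: "(\<integral>z. z ^ k \<partial>M) = cnj (of_real (2 * pi) * moment M k)"
proof -
  have "(\<integral>z. z ^ k \<partial>M) = (\<integral>z. cnj (cnj z ^ k) \<partial>M)"
    by simp
  also have "\<dots> = cnj (\<integral>z. cnj z ^ k \<partial>M)"
    by (rule Bochner_Integration.integral_cnj)
  finally show ?thesis
    by (simp only: integral_cnj_power_eq_moment)
qed

lemma measure_space_eq_moment_0: "measure M (space M) = 2 * pi * Re (moment M 0)"
  by (simp add: moment_def)

lemma cnj_power_eq_on_circle:
  assumes "z \<in> circleT"
  shows "z ^ j * cnj z ^ k = (if k \<le> j then z ^ (j - k) else cnj z ^ (k - j))"
proof -
  have unit: "(z * cnj z) ^ n = 1" for n
    using assms by (simp add: complex_norm_square[symmetric])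
  show ?thesis
  proof (cases "k \<le> j")
    case True
    then obtain d where "j = k + d"
      using le_Suc_ex by blast
    then have "z ^ j * cnj z ^ k = (z * cnj z) ^ k * z ^ d"
      by (simp add: power_add power_mult_distrib)
    with True \<open>j = k + d\<close> unit show ?thesis
      by simp
  next
    case False
    then obtain d where "k = j + d"
      using le_Suc_ex nat_le_linear by blast
    then have "z ^ j * cnj z ^ k = (z * cnj z) ^ j * cnj z ^ d"
      by (simp add: power_add power_mult_distrib)
    with False \<open>k = j + d\<close> unit show ?thesis
      by simp
  qed
qed

section \<open>Polynomials in z and cnj z\<close>

text \<open>On the circle cnj z = 1 / z, so these are the trigonometric polynomials; their integrals
  are linear combinations of moments.\<close>

inductive_set trig_poly :: "(complex \<Rightarrow> complex) set" where
  monomial: "(\<lambda>z. z ^ j * cnj z ^ k) \<in> trig_poly"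
| add: "f \<in> trig_poly \<Longrightarrow> g \<in> trig_poly \<Longrightarrow> (\<lambda>z. f z + g z) \<in> trig_poly"
| scale: "f \<in> trig_poly \<Longrightarrow> (\<lambda>z. c * f z) \<in> trig_poly"

lemma trig_poly_const: "(\<lambda>z. c) \<in> trig_poly"
  using trig_poly.scale[OF trig_poly.monomial[of 0 0], of c] by simp

lemma trig_poly_mult_monomial:
  "g \<in> trig_poly \<Longrightarrow> (\<lambda>z. z ^ j * cnj z ^ k * g z) \<in> trig_poly"
proof (induction g rule: trig_poly.induct)
  case (monomial j' k')
  then show ?case
    using trig_poly.monomial[of "j + j'" "k + k'"] by (simp add: power_add mult_ac)
next
  case (add f g)
  then show ?case using trig_poly.add[OF add.IH] by (simp add: distrib_left)
next
  case (scale f c)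
  then show ?case using trig_poly.scale[OF scale.IH, of c] by (simp add: mult_ac)
qed

lemma trig_poly_mult: "f \<in> trig_poly \<Longrightarrow> g \<in> trig_poly \<Longrightarrow> (\<lambda>z. f z * g z) \<in> trig_poly"
proof (induction f rule: trig_poly.induct)
  case (monomial j k)
  then show ?case by (rule trig_poly_mult_monomial)
next
  case (add f1 f2)
  then show ?case using trig_poly.add[OF add.IH] by (simp add: distrib_right)
next
  case (scale f c)
  then show ?case using trig_poly.scale[OF scale.IH, of c] by (simp add: mult.assoc)
qed

lemma trig_poly_Re: "(\<lambda>z. of_real (Re z)) \<in> trig_poly"
proof -
  have "(\<lambda>z. 1/2 * (z ^ 1 * cnj z ^ 0 + z ^ 0 * cnj z ^ 1)) \<in> trig_poly"
    by (rule trig_poly.scale[OF trig_poly.add[OF trig_poly.monomial trig_poly.monomial]])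
  then show ?thesis by (simp add: complex_add_cnj)
qed

lemma trig_poly_Im: "(\<lambda>z. of_real (Im z)) \<in> trig_poly"
proof -
  have "(\<lambda>z. 1/(2*\<i>) * (z ^ 1 * cnj z ^ 0 + (-1) * (z ^ 0 * cnj z ^ 1))) \<in> trig_poly"
    by (rule trig_poly.scale[OF trig_poly.add[OF trig_poly.monomial
          trig_poly.scale[OF trig_poly.monomial]]])
  moreover have "1/(2*\<i>) * (z ^ 1 * cnj z ^ 0 + (-1) * (z ^ 0 * cnj z ^ 1)) = of_real (Im z)" for z
    using complex_diff_cnj[of z] by (simp add: field_simps)
  ultimately show ?thesis by simp
qed

lemma trig_poly_real_polynomial_function:
  "real_polynomial_function g \<Longrightarrow> (\<lambda>z. of_real (g z)) \<in> trig_poly"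
proof (induction g rule: real_polynomial_function.induct)
  case (linear f)
  interpret bounded_linear f by fact
  have "complex_of_real (f z) = of_real (f 1) * of_real (Re z) + of_real (f \<i>) * of_real (Im z)"
    for z
  proof -
    have "Re z *\<^sub>R 1 + Im z *\<^sub>R \<i> = z"
      by (simp add: complex_eq_iff)
    then have "f z = f (Re z *\<^sub>R 1 + Im z *\<^sub>R \<i>)"
      by simp
    also have "\<dots> = Re z *\<^sub>R f 1 + Im z *\<^sub>R f \<i>"
      by (simp only: add scale)
    finally show ?thesis
      by (simp add: mult.commute)
  qed
  then have "(\<lambda>z. complex_of_real (f z)) =
      (\<lambda>z. of_real (f 1) * of_real (Re z) + of_real (f \<i>) * of_real (Im z))"
    by (rule ext)
  also have "\<dots> \<in> trig_poly"
    by (rule trig_poly.add[OF trig_poly.scale[OF trig_poly_Re] trig_poly.scale[OF trig_poly_Im]])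
  finally show ?case .
next
  case (const c)
  show ?case by (rule trig_poly_const)
next
  case (add f g)
  then show ?case using trig_poly.add[OF add.IH] by simp
next
  case (mult f g)
  then show ?case using trig_poly_mult[OF mult.IH] by simp
qed

lemma continuous_on_trig_poly: "f \<in> trig_poly \<Longrightarrow> continuous_on S f"
proof (induction f rule: trig_poly.induct)
  case (monomial j k)
  show ?case
    by (intro continuous_on_mult continuous_on_power continuous_on_cnj continuous_on_id)
next
  case (add f g)
  show ?case by (rule continuous_on_add[OF add.IH])
next
  case (scale f c)
  show ?case by (rule continuous_on_mult_left[OF scale.IH])
qed

section \<open>The uncertainty sets form a base of the weak neighbourhoods\<close>

definition moment_filter :: "complex measure \<Rightarrow> complex measure filter" where
  "moment_filter \<nu> = (INF p \<in> UNIV \<times> {0<..}. principal (uncert (moment \<nu>) (fst p) (snd p)))"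

lemma uncert_mono: "n \<le> n' \<Longrightarrow> \<epsilon>' \<le> \<epsilon> \<Longrightarrow> uncert c n' \<epsilon>' \<subseteq> uncert c n \<epsilon>"
  unfolding uncert_def by (auto intro: less_le_trans dest: le_trans)

lemma eventually_moment_filter:
  "eventually P (moment_filter \<nu>) \<longleftrightarrow> (\<exists>n \<epsilon>. 0 < \<epsilon> \<and> (\<forall>M \<in> uncert (moment \<nu>) n \<epsilon>. P M))"
proof -
  have "eventually P (moment_filter \<nu>) \<longleftrightarrow>
      (\<exists>p \<in> UNIV \<times> {0<..}. eventually P (principal (uncert (moment \<nu>) (fst p) (snd p))))"
    unfolding moment_filter_def
  proof (rule eventually_INF_base)
    fix p q :: "nat \<times> real"
    assume "p \<in> UNIV \<times> {0<..}" "q \<in> UNIV \<times> {0<..}"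
    moreover have "uncert (moment \<nu>) (max (fst p) (fst q)) (min (snd p) (snd q)) \<subseteq>
        uncert (moment \<nu>) (fst p) (snd p) \<inter> uncert (moment \<nu>) (fst q) (snd q)"
      by (intro Int_greatest uncert_mono) auto
    ultimately show "\<exists>r \<in> UNIV \<times> {0<..}. principal (uncert (moment \<nu>) (fst r) (snd r)) \<le>
        inf (principal (uncert (moment \<nu>) (fst p) (snd p))) (principal (uncert (moment \<nu>) (fst q) (snd q)))"
      by (intro bexI[of _ "(max (fst p) (fst q), min (snd p) (snd q))"]) (auto simp: inf_principal)
  qed auto
  then show ?thesis
    by (auto simp: eventually_principal)
qed

lemma eventually_Meas_moment_filter: "eventually (\<lambda>M. M \<in> Meas) (moment_filter \<nu>)"
  unfolding eventually_moment_filter uncert_def by (auto intro: exI[of _ 1])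

lemma tendsto_moment_moment_filter: "((\<lambda>M. moment M k) \<longlongrightarrow> moment \<nu> k) (moment_filter \<nu>)"
proof (rule tendstoI)
  fix r :: real
  assume "0 < r"
  then show "eventually (\<lambda>M. dist (moment M k) (moment \<nu> k) < r) (moment_filter \<nu>)"
    unfolding eventually_moment_filter uncert_def
    by (intro exI[of _ k] exI[of _ r]) (auto simp: dist_norm norm_minus_commute)
qed

lemma integral_monomial_eq_moment:
  assumes "M \<in> Meas"
  shows "(\<integral>z. z ^ j * cnj z ^ k \<partial>M) =
    (if k \<le> j then cnj (of_real (2 * pi) * moment M (j - k)) else of_real (2 * pi) * moment M (k - j))"
proof -
  have "(\<integral>z. z ^ j * cnj z ^ k \<partial>M) =
      (\<integral>z. (if k \<le> j then z ^ (j - k) else cnj z ^ (k - j)) \<partial>M)"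
    using assms by (intro Bochner_Integration.integral_cong) (auto simp: space_Meas cnj_power_eq_on_circle)
  then show ?thesis
    by (simp add: integral_power_eq_moment integral_cnj_power_eq_moment)
qed

lemma integrable_trig_poly: "h \<in> trig_poly \<Longrightarrow> M \<in> Meas \<Longrightarrow> integrable M h"
  by (intro integrable_Meas_continuous_on continuous_on_trig_poly)

lemma tendsto_integral_trig_poly_moment_filter:
  assumes "h \<in> trig_poly" and \<nu>: "\<nu> \<in> Meas"
  shows "((\<lambda>M. \<integral>z. h z \<partial>M) \<longlongrightarrow> (\<integral>z. h z \<partial>\<nu>)) (moment_filter \<nu>)"
  using assms(1)
proof (induction h rule: trig_poly.induct)
  case (monomial j k)
  have "((\<lambda>M. if k \<le> j then cnj (of_real (2 * pi) * moment M (j - k)) else of_real (2 * pi) * moment M (k - j))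
      \<longlongrightarrow> (\<integral>z. z ^ j * cnj z ^ k \<partial>\<nu>)) (moment_filter \<nu>)"
    unfolding integral_monomial_eq_moment[OF \<nu>]
    by (cases "k \<le> j") (simp_all add: tendsto_cnj tendsto_mult_left tendsto_moment_moment_filter)
  moreover have "eventually (\<lambda>M. (\<integral>z. z ^ j * cnj z ^ k \<partial>M) =
      (if k \<le> j then cnj (of_real (2 * pi) * moment M (j - k)) else of_real (2 * pi) * moment M (k - j)))
      (moment_filter \<nu>)"
    using eventually_Meas_moment_filter by eventually_elim (rule integral_monomial_eq_moment)
  ultimately show ?case
    by (simp add: tendsto_cong)
next
  case (add f g)
  have "eventually (\<lambda>M. (\<integral>z. f z + g z \<partial>M) = (\<integral>z. f z \<partial>M) + (\<integral>z. g z \<partial>M)) (moment_filter \<nu>)"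
    using eventually_Meas_moment_filter
    by eventually_elim (simp add: integrable_trig_poly add.hyps)
  moreover have "(\<integral>z. f z + g z \<partial>\<nu>) = (\<integral>z. f z \<partial>\<nu>) + (\<integral>z. g z \<partial>\<nu>)"
    by (simp add: integrable_trig_poly add.hyps \<nu>)
  ultimately show ?case
    by (simp add: tendsto_cong tendsto_add[OF add.IH])
next
  case (scale f c)
  then show ?case
    by (simp add: tendsto_mult_left)
qed

lemma tendsto_measure_space_moment_filter:
  "((\<lambda>M. measure M (space M)) \<longlongrightarrow> measure \<nu> (space \<nu>)) (moment_filter \<nu>)"
  unfolding measure_space_eq_moment_0
  by (intro tendsto_mult_left tendsto_Re tendsto_moment_moment_filter)

lemma dist_integral_le_uniform_approx:
  fixes f g :: "complex \<Rightarrow> real"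
  assumes M: "M \<in> Meas" and \<nu>: "\<nu> \<in> Meas"
    and f: "continuous_on circleT f" and g: "continuous_on circleT g"
    and fg: "\<And>z. z \<in> circleT \<Longrightarrow> \<bar>f z - g z\<bar> \<le> e"
  shows "dist (\<integral>z. f z \<partial>M) (\<integral>z. f z \<partial>\<nu>) \<le>
    e * measure M (space M) + dist (\<integral>z. g z \<partial>M) (\<integral>z. g z \<partial>\<nu>) + e * measure \<nu> (space \<nu>)"
proof -
  have "dist (\<integral>z. f z \<partial>M) (\<integral>z. f z \<partial>\<nu>) \<le>
      dist (\<integral>z. f z \<partial>M) (\<integral>z. g z \<partial>M) + dist (\<integral>z. g z \<partial>M) (\<integral>z. g z \<partial>\<nu>) +
      dist (\<integral>z. g z \<partial>\<nu>) (\<integral>z. f z \<partial>\<nu>)"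
    using dist_triangle[of "\<integral>z. f z \<partial>M" "\<integral>z. g z \<partial>\<nu>" "\<integral>z. g z \<partial>M"]
      dist_triangle[of "\<integral>z. f z \<partial>M" "\<integral>z. f z \<partial>\<nu>" "\<integral>z. g z \<partial>\<nu>"] by linarith
  moreover have "dist (\<integral>z. f z \<partial>M) (\<integral>z. g z \<partial>M) \<le> e * measure M (space M)"
    unfolding dist_real_def by (rule abs_integral_diff_le_uniform[OF M f g fg])
  moreover have "dist (\<integral>z. g z \<partial>\<nu>) (\<integral>z. f z \<partial>\<nu>) \<le> e * measure \<nu> (space \<nu>)"
    unfolding dist_real_def abs_minus_commute[of "\<integral>z. g z \<partial>\<nu>"]
    by (rule abs_integral_diff_le_uniform[OF \<nu> f g fg])
  ultimately show ?thesis
    by linarith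
qed

lemma tendsto_integral_moment_filter:
  fixes f :: "complex \<Rightarrow> real"
  assumes f: "continuous_on circleT f" and \<nu>: "\<nu> \<in> Meas"
  shows "((\<lambda>M. \<integral>z. f z \<partial>M) \<longlongrightarrow> (\<integral>z. f z \<partial>\<nu>)) (moment_filter \<nu>)"
proof (rule tendstoI)
  txt \<open>An r/3 argument: replace f by a polynomial g that is e-close to it on the circle.  The
    integrals of g converge, and the two replacement errors are at most e times the masses of
    M and \<nu>, where the mass of M is eventually below that of \<nu> plus 1.\<close>
  fix r :: real
  assume r: "0 < r"
  define m where "m = measure \<nu> (space \<nu>)"
  have "0 \<le> m"
    by (simp add: m_def)
  define e where "e = r / (6 * m + 3)"
  have "6 * m + 3 \<noteq> 0"
    using \<open>0 \<le> m\<close> by linarith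
  then have "e * (6 * m + 3) = r"
    by (simp add: e_def)
  then have "6 * (e * m) + 3 * e = r"
    by (simp add: algebra_simps)
  moreover have "0 < e"
    using r \<open>0 \<le> m\<close> by (simp add: e_def)
  ultimately have e: "0 < e" "(e * m + e) + e * m < r - r / 3"
    using r by linarith+
  obtain g where g: "real_polynomial_function g" "\<And>z. z \<in> circleT \<Longrightarrow> \<bar>f z - g z\<bar> < e"
    using Stone_Weierstrass_real_polynomial_function[OF compact_sphere f e(1)] by blast
  have g_cont: "continuous_on circleT g"
    using g(1) continuous_on_polymonial_function real_polynomial_function_eq by blast
  have "((\<lambda>M. \<integral>z. g z \<partial>M) \<longlongrightarrow> (\<integral>z. g z \<partial>\<nu>)) (moment_filter \<nu>)"
    using tendsto_integral_trig_poly_moment_filter[OF trig_poly_real_polynomial_function[OF g(1)] \<nu>]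
    by (simp add: tendsto_of_real_iff)
  then have "eventually (\<lambda>M. dist (\<integral>z. g z \<partial>M) (\<integral>z. g z \<partial>\<nu>) < r / 3) (moment_filter \<nu>)"
    using r by (intro tendstoD) simp_all
  moreover have "eventually (\<lambda>M. measure M (space M) < m + 1) (moment_filter \<nu>)"
    using tendsto_measure_space_moment_filter unfolding m_def by (rule order_tendstoD) simp
  ultimately show "eventually (\<lambda>M. dist (\<integral>z. f z \<partial>M) (\<integral>z. f z \<partial>\<nu>) < r) (moment_filter \<nu>)"
    using eventually_Meas_moment_filter
  proof eventually_elim
    case (elim M)
    have "e * measure M (space M) \<le> e * (m + 1)"
      using elim(2) e(1) by (intro mult_left_mono) auto
    moreover have "\<And>z. z \<in> circleT \<Longrightarrow> \<bar>f z - g z\<bar> \<le> e"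
      using g(2) by (simp add: less_imp_le)
    note dist_integral_le_uniform_approx[OF elim(3) \<nu> f g_cont this]
    ultimately show ?case
      using elim(1) e(2) unfolding m_def distrib_left by linarith
  qed
qed

definition weak_subbasis :: "complex measure set set" where
  "weak_subbasis = {{M \<in> Meas. (\<integral>z. f z \<partial>M) \<in> U} | f U. continuous_on circleT f \<and> open (U :: real set)}"

lemma weak_top_eq: "weak_top = topology_generated_by weak_subbasis"
  unfolding weak_top_def weak_subbasis_def ..

lemma topspace_weak_top: "topspace weak_top = Meas"
proof -
  have "Meas \<in> weak_subbasis"
    unfolding weak_subbasis_def by (intro CollectI exI[of _ "\<lambda>_. 0"] exI[of _ UNIV]) auto
  moreover have "\<Union>weak_subbasis \<subseteq> Meas"
    unfolding weak_subbasis_def by blast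
  ultimately show ?thesis
    unfolding weak_top_eq topology_generated_by_topspace by blast
qed

lemma openin_weak_top_integral:
  fixes f :: "complex \<Rightarrow> real"
  assumes "continuous_on circleT f" "open U"
  shows "openin weak_top {M \<in> Meas. (\<integral>z. f z \<partial>M) \<in> U}"
  unfolding weak_top_eq weak_subbasis_def by (rule topology_generated_by_Basis) (use assms in blast)

lemma eventually_Meas_nhdsin_weak_top: "eventually (\<lambda>M. M \<in> Meas) (nhdsin weak_top \<nu>)"
  unfolding eventually_nhdsin
  using openin_topspace[of weak_top] by (metis topspace_weak_top)

lemma tendsto_integral_nhdsin_weak_top:
  fixes f :: "complex \<Rightarrow> real"
  assumes f: "continuous_on circleT f" and \<nu>: "\<nu> \<in> Meas"
  shows "((\<lambda>M. \<integral>z. f z \<partial>M) \<longlongrightarrow> (\<integral>z. f z \<partial>\<nu>)) (nhdsin weak_top \<nu>)"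
proof (rule topological_tendstoI)
  fix U :: "real set"
  assume "open U" "(\<integral>z. f z \<partial>\<nu>) \<in> U"
  then show "eventually (\<lambda>M. (\<integral>z. f z \<partial>M) \<in> U) (nhdsin weak_top \<nu>)"
    unfolding eventually_nhdsin using \<nu> openin_weak_top_integral[OF f \<open>open U\<close>]
    by (intro disjI2 exI[of _ "{M \<in> Meas. (\<integral>z. f z \<partial>M) \<in> U}"]) auto
qed

lemma moment_eq_integral_Re_Im:
  assumes "M \<in> Meas"
  shows "moment M k = of_real (1 / (2 * pi)) *
    (of_real (\<integral>z. Re (cnj z ^ k) \<partial>M) + \<i> * of_real (\<integral>z. Im (cnj z ^ k) \<partial>M))"
proof -
  have "integrable M (\<lambda>z. cnj z ^ k)"
    using assms by (intro integrable_Meas_continuous_on continuous_intros)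
  then show ?thesis
    by (simp add: moment_def complex_eq_iff)
qed

lemma tendsto_moment_nhdsin_weak_top:
  assumes \<nu>: "\<nu> \<in> Meas"
  shows "((\<lambda>M. moment M k) \<longlongrightarrow> moment \<nu> k) (nhdsin weak_top \<nu>)"
proof -
  have "continuous_on circleT (\<lambda>z. Re (cnj z ^ k))" "continuous_on circleT (\<lambda>z. Im (cnj z ^ k))"
    by (intro continuous_intros)+
  then have "((\<lambda>M. of_real (1 / (2 * pi)) *
      (of_real (\<integral>z. Re (cnj z ^ k) \<partial>M) + \<i> * of_real (\<integral>z. Im (cnj z ^ k) \<partial>M))) \<longlongrightarrow> moment \<nu> k)
      (nhdsin weak_top \<nu>)"
    unfolding moment_eq_integral_Re_Im[OF \<nu>]
    by (intro tendsto_intros tendsto_integral_nhdsin_weak_top \<nu>)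
  moreover have "eventually (\<lambda>M. moment M k = of_real (1 / (2 * pi)) *
      (of_real (\<integral>z. Re (cnj z ^ k) \<partial>M) + \<i> * of_real (\<integral>z. Im (cnj z ^ k) \<partial>M))) (nhdsin weak_top \<nu>)"
    using eventually_Meas_nhdsin_weak_top by eventually_elim (rule moment_eq_integral_Re_Im)
  ultimately show ?thesis
    by (simp add: tendsto_cong)
qed

lemma eventually_open_moment_filter:
  assumes "openin weak_top U" "\<nu> \<in> U"
  shows "eventually (\<lambda>M. M \<in> U) (moment_filter \<nu>)"
proof -
  have "generate_topology_on weak_subbasis U"
    using assms(1) unfolding weak_top_eq openin_topology_generated_by_iff .
  then show ?thesis
    using assms(2)
  proof (induction arbitrary: \<nu>)
    case (Int A B)
    from Int.prems have "\<nu> \<in> A" "\<nu> \<in> B"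
      by auto
    then have "eventually (\<lambda>M. M \<in> A \<and> M \<in> B) (moment_filter \<nu>)"
      by (intro eventually_conj Int.IH)
    then show ?case
      by simp
  next
    case (UN K)
    from UN.prems obtain A where "A \<in> K" "\<nu> \<in> A"
      by blast
    then have "eventually (\<lambda>M. M \<in> A) (moment_filter \<nu>)"
      by (rule UN.IH)
    then show ?case
      by (rule eventually_mono) (use \<open>A \<in> K\<close> in blast)
  next
    case (Basis A)
    have "\<exists>f V. A = {M \<in> Meas. (\<integral>z. f z \<partial>M) \<in> V} \<and> continuous_on circleT f \<and> open (V :: real set)"
      using Basis.hyps unfolding weak_subbasis_def by (simp only: mem_Collect_eq)
    then obtain f and V :: "real set" where A: "A = {M \<in> Meas. (\<integral>z. f z \<partial>M) \<in> V}" and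
        f: "continuous_on circleT f" and "open V"
      by blast
    have \<nu>: "\<nu> \<in> Meas" "(\<integral>z. f z \<partial>\<nu>) \<in> V"
      using Basis.prems unfolding A by simp_all
    have "eventually (\<lambda>M. (\<integral>z. f z \<partial>M) \<in> V) (moment_filter \<nu>)"
      by (rule topological_tendstoD[OF tendsto_integral_moment_filter[OF f \<nu>(1)] \<open>open V\<close> \<nu>(2)])
    with eventually_Meas_moment_filter
    have "eventually (\<lambda>M. M \<in> Meas \<and> (\<integral>z. f z \<partial>M) \<in> V) (moment_filter \<nu>)"
      by (rule eventually_conj)
    then show ?case
      unfolding A by simp
  qed simp
qed

lemma nhdsin_weak_top_eq_moment_filter:
  assumes \<nu>: "\<nu> \<in> Meas"
  shows "nhdsin weak_top \<nu> = moment_filter \<nu>"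
proof (rule antisym)
  show "nhdsin weak_top \<nu> \<le> moment_filter \<nu>"
    unfolding le_filter_def
  proof (intro allI impI)
    fix P
    assume "eventually P (moment_filter \<nu>)"
    then obtain n \<epsilon> where "0 < \<epsilon>" and P: "\<forall>M \<in> uncert (moment \<nu>) n \<epsilon>. P M"
      unfolding eventually_moment_filter by blast
    have "\<forall>k \<in> {..n}. eventually (\<lambda>M. dist (moment M k) (moment \<nu> k) < \<epsilon>) (nhdsin weak_top \<nu>)"
      using tendsto_moment_nhdsin_weak_top[OF \<nu>] \<open>0 < \<epsilon>\<close> tendstoD by blast
    then have "eventually (\<lambda>M. \<forall>k \<in> {..n}. dist (moment M k) (moment \<nu> k) < \<epsilon>) (nhdsin weak_top \<nu>)"
      by (intro eventually_ball_finite) auto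
    with eventually_Meas_nhdsin_weak_top show "eventually P (nhdsin weak_top \<nu>)"
    proof eventually_elim
      case (elim M)
      then have "M \<in> uncert (moment \<nu>) n \<epsilon>"
        by (auto simp: uncert_def dist_norm norm_minus_commute)
      with P show ?case
        by blast
    qed
  qed
  show "moment_filter \<nu> \<le> nhdsin weak_top \<nu>"
    unfolding le_filter_def
  proof (intro allI impI)
    fix P
    assume "eventually P (nhdsin weak_top \<nu>)"
    then obtain U where "openin weak_top U" "\<nu> \<in> U" "\<forall>M \<in> U. P M"
      unfolding eventually_nhdsin using \<nu> topspace_weak_top by blast
    then show "eventually P (moment_filter \<nu>)"
      using eventually_open_moment_filter eventually_mono by blast
  qed
qed

section \<open>Weak continuity of a metric\<close>

lemma eventually_nhdsin_lt_if_continuous_map: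
  fixes d :: "'a \<Rightarrow> 'a \<Rightarrow> real"
  assumes cont: "continuous_map (prod_topology X X) euclideanreal (\<lambda>p. d (fst p) (snd p))"
    and refl: "\<And>a. a \<in> topspace X \<Longrightarrow> d a a = 0"
  shows "\<forall>a \<in> topspace X. \<forall>\<eta>>0. eventually (\<lambda>x. d a x < \<eta>) (nhdsin X a)"
proof (intro ballI allI impI)
  fix a and \<eta> :: real
  assume a: "a \<in> topspace X" and "0 < \<eta>"
  let ?P = "{p \<in> topspace (prod_topology X X). d (fst p) (snd p) \<in> {..<\<eta>}}"
  have "openin (prod_topology X X) ?P"
    by (rule openin_continuous_map_preimage[OF cont]) simp
  moreover have "(a, a) \<in> ?P"
    using a refl[OF a] \<open>0 < \<eta>\<close> by simp
  ultimately have "\<exists>U V. openin X U \<and> openin X V \<and> a \<in> U \<and> a \<in> V \<and> U \<times> V \<subseteq> ?P"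
    by (rule openin_prod_topology_alt[THEN iffD1, rule_format])
  then obtain U V where "openin X V" "a \<in> U" "a \<in> V" "U \<times> V \<subseteq> ?P"
    by iprover
  then have "\<forall>x \<in> V. d a x < \<eta>"
    by auto
  with \<open>openin X V\<close> \<open>a \<in> V\<close> show "eventually (\<lambda>x. d a x < \<eta>) (nhdsin X a)"
    unfolding eventually_nhdsin by blast
qed

lemma abs_pseudometric_diff_le:
  fixes d :: "'a \<Rightarrow> 'a \<Rightarrow> real"
  assumes sym: "\<And>a b. a \<in> topspace X \<Longrightarrow> b \<in> topspace X \<Longrightarrow> d a b = d b a"
    and triangle: "\<And>a b c. a \<in> topspace X \<Longrightarrow> b \<in> topspace X \<Longrightarrow> c \<in> topspace X \<Longrightarrow>
      d a c \<le> d a b + d b c"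
    and "a \<in> topspace X" "b \<in> topspace X" "x \<in> topspace X" "y \<in> topspace X"
  shows "\<bar>d x y - d a b\<bar> \<le> d a x + d b y"
  unfolding abs_le_iff
  using triangle[of x a y] triangle[of a b y] triangle[of a x b] triangle[of x y b]
    sym[of x a] sym[of y b] assms(3-)
  by linarith

lemma continuous_map_if_eventually_nhdsin_lt:
  fixes d :: "'a \<Rightarrow> 'a \<Rightarrow> real"
  assumes sym: "\<And>a b. a \<in> topspace X \<Longrightarrow> b \<in> topspace X \<Longrightarrow> d a b = d b a"
    and triangle: "\<And>a b c. a \<in> topspace X \<Longrightarrow> b \<in> topspace X \<Longrightarrow> c \<in> topspace X \<Longrightarrow>
      d a c \<le> d a b + d b c"
    and near: "\<forall>a \<in> topspace X. \<forall>\<eta>>0. eventually (\<lambda>x. d a x < \<eta>) (nhdsin X a)"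
  shows "continuous_map (prod_topology X X) euclideanreal (\<lambda>p. d (fst p) (snd p))"
  unfolding continuous_map_def
proof (intro conjI allI impI)
  fix U :: "real set"
  assume "openin euclideanreal U"
  then have "open U"
    by simp
  show "openin (prod_topology X X) {p \<in> topspace (prod_topology X X). d (fst p) (snd p) \<in> U}"
    (is "openin _ ?P")
  proof (subst openin_subopen, intro ballI)
    fix p
    assume "p \<in> ?P"
    then obtain a b where p: "p = (a, b)" and a: "a \<in> topspace X" and b: "b \<in> topspace X"
      and "d a b \<in> U"
      by auto
    then obtain \<eta> where "0 < \<eta>" and \<eta>: "ball (d a b) \<eta> \<subseteq> U"
      using \<open>open U\<close> openE by blast
    moreover have "0 < \<eta> / 2"
      using \<open>0 < \<eta>\<close> by simp
    ultimately have "eventually (\<lambda>x. d a x < \<eta> / 2) (nhdsin X a)" "eventually (\<lambda>y. d b y < \<eta> / 2) (nhdsin X b)"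
      using near a b by blast+
    then obtain S T where S: "openin X S" "a \<in> S" "\<forall>x\<in>S. d a x < \<eta> / 2"
      and T: "openin X T" "b \<in> T" "\<forall>y\<in>T. d b y < \<eta> / 2"
      unfolding eventually_nhdsin using a b by blast
    have "S \<times> T \<subseteq> ?P"
    proof (rule subrelI)
      fix x y
      assume "(x, y) \<in> S \<times> T"
      then have "x \<in> S" "y \<in> T"
        by simp_all
      then have "x \<in> topspace X" "y \<in> topspace X"
        using S(1) T(1) openin_subset by blast+
      moreover have "d a x < \<eta> / 2" "d b y < \<eta> / 2"
        using \<open>x \<in> S\<close> \<open>y \<in> T\<close> S(3) T(3) by blast+
      ultimately have "\<bar>d x y - d a b\<bar> < \<eta>"
        using abs_pseudometric_diff_le[where X = X and d = d, OF sym triangle a b \<open>x \<in> topspace X\<close> \<open>y \<in> topspace X\<close>]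
        by linarith
      then have "d x y \<in> U"
        using \<eta> by (auto simp: dist_real_def abs_minus_commute)
      with \<open>x \<in> topspace X\<close> \<open>y \<in> topspace X\<close> show "(x, y) \<in> ?P"
        by simp
    qed
    moreover have "openin (prod_topology X X) (S \<times> T)"
      using S(1) T(1) by (simp add: openin_prod_Times_iff)
    ultimately show "\<exists>W. openin (prod_topology X X) W \<and> p \<in> W \<and> W \<subseteq> ?P"
      using p S(2) T(2) by blast
  qed
qed simp

lemma continuous_map_pseudometric_iff:
  fixes d :: "'a \<Rightarrow> 'a \<Rightarrow> real"
  assumes refl: "\<And>a. a \<in> topspace X \<Longrightarrow> d a a = 0"
    and sym: "\<And>a b. a \<in> topspace X \<Longrightarrow> b \<in> topspace X \<Longrightarrow> d a b = d b a"
    and triangle: "\<And>a b c. a \<in> topspace X \<Longrightarrow> b \<in> topspace X \<Longrightarrow> c \<in> topspace X \<Longrightarrow>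
      d a c \<le> d a b + d b c"
  shows "continuous_map (prod_topology X X) euclideanreal (\<lambda>p. d (fst p) (snd p)) \<longleftrightarrow>
    (\<forall>a \<in> topspace X. \<forall>\<eta>>0. eventually (\<lambda>x. d a x < \<eta>) (nhdsin X a))"
  using eventually_nhdsin_lt_if_continuous_map[OF _ refl]
    continuous_map_if_eventually_nhdsin_lt[OF sym triangle]
  by (rule iffI)

lemma metric_on_MeasD:
  assumes "metric_on_Meas \<delta>" "a \<in> Meas" "b \<in> Meas" "c \<in> Meas"
  shows "\<delta> a a = 0" "\<delta> a b = \<delta> b a" "\<delta> a c \<le> \<delta> a b + \<delta> b c"
  using assms unfolding metric_on_Meas_def by blast+

lemma weakly_continuous_iff_eventually:
  assumes "metric_on_Meas \<delta>"
  shows "weakly_continuous \<delta> \<longleftrightarrow> (\<forall>\<nu>\<in>Meas. \<forall>\<eta>>0. eventually (\<lambda>M. \<delta> \<nu> M < \<eta>) (nhdsin weak_top \<nu>))"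
  unfolding weakly_continuous_def
  by (subst continuous_map_pseudometric_iff) (use metric_on_MeasD[OF assms] in \<open>auto simp: topspace_weak_top\<close>)

section \<open>Diameters of the uncertainty sets\<close>

lemma diam_delta_ge: "a \<in> F \<Longrightarrow> b \<in> F \<Longrightarrow> ereal (d a b) \<le> diam_delta d F"
  unfolding diam_delta_def by (rule SUP_upper2[of "(a, b)"]) auto

lemma diam_delta_le: "(\<And>a b. a \<in> F \<Longrightarrow> b \<in> F \<Longrightarrow> d a b \<le> \<eta>) \<Longrightarrow> diam_delta d F \<le> ereal \<eta>"
  unfolding diam_delta_def by (rule SUP_least) auto

lemma mem_uncert_moment_self: "\<nu> \<in> Meas \<Longrightarrow> 0 < \<epsilon> \<Longrightarrow> \<nu> \<in> uncert (moment \<nu>) n \<epsilon>"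
  unfolding uncert_def by simp

lemma diam_uncert_nonneg:
  assumes \<delta>: "metric_on_Meas \<delta>" and \<nu>: "\<nu> \<in> Meas" and "0 < \<epsilon>"
  shows "0 \<le> diam_delta \<delta> (uncert (moment \<nu>) n \<epsilon>)"
proof -
  have "\<nu> \<in> uncert (moment \<nu>) n \<epsilon>"
    using \<nu> \<open>0 < \<epsilon>\<close> by (rule mem_uncert_moment_self)
  then show ?thesis
    using diam_delta_ge[of \<nu> _ \<nu> \<delta>] metric_on_MeasD(1)[OF \<delta> \<nu> \<nu> \<nu>]
    by (simp add: zero_ereal_def)
qed

lemma diam_uncert_le:
  assumes \<delta>: "metric_on_Meas \<delta>" and \<nu>: "\<nu> \<in> Meas"
    and small: "\<forall>M \<in> uncert (moment \<nu>) n0 \<epsilon>0. \<delta> \<nu> M \<le> \<eta>" and "n0 \<le> n" "\<epsilon> \<le> \<epsilon>0"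
  shows "diam_delta \<delta> (uncert (moment \<nu>) n \<epsilon>) \<le> ereal (2 * \<eta>)"
proof (rule diam_delta_le)
  fix M M'
  assume M: "M \<in> uncert (moment \<nu>) n \<epsilon>" and M': "M' \<in> uncert (moment \<nu>) n \<epsilon>"
  then have "M \<in> Meas" "M' \<in> Meas"
    by (simp_all add: uncert_def)
  then have "\<delta> M M' \<le> \<delta> \<nu> M + \<delta> \<nu> M'"
    using metric_on_MeasD(2,3)[OF \<delta> \<open>M \<in> Meas\<close> \<nu> \<open>M' \<in> Meas\<close>] by linarith
  moreover have "\<delta> \<nu> M \<le> \<eta>" "\<delta> \<nu> M' \<le> \<eta>"
    using small uncert_mono[OF \<open>n0 \<le> n\<close> \<open>\<epsilon> \<le> \<epsilon>0\<close>] M M' by blast+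
  ultimately show "\<delta> M M' \<le> 2 * \<eta>"
    by linarith
qed

lemma tendsto_diam_uncert:
  assumes \<delta>: "metric_on_Meas \<delta>" and \<nu>: "\<nu> \<in> Meas"
    and near: "\<forall>\<eta>>0. eventually (\<lambda>M. \<delta> \<nu> M < \<eta>) (moment_filter \<nu>)"
    and \<epsilon>: "\<forall>n. \<epsilon> n > 0" "\<epsilon> \<longlonglongrightarrow> 0"
  shows "(\<lambda>n. diam_delta \<delta> (uncert (moment \<nu>) n (\<epsilon> n))) \<longlonglongrightarrow> 0"
proof (rule order_tendstoI)
  fix a :: ereal
  assume "a < 0"
  then have "a < diam_delta \<delta> (uncert (moment \<nu>) n (\<epsilon> n))" for n
    using diam_uncert_nonneg[OF \<delta> \<nu>, of "\<epsilon> n" n] \<epsilon>(1) by (metis less_le_trans)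
  then show "eventually (\<lambda>n. a < diam_delta \<delta> (uncert (moment \<nu>) n (\<epsilon> n))) sequentially"
    by simp
next
  fix a :: ereal
  assume "0 < a"
  then obtain \<eta> where "0 < ereal \<eta>" "ereal \<eta> < a"
    using ereal_dense2 by blast
  then have "eventually (\<lambda>M. \<delta> \<nu> M < \<eta> / 2) (moment_filter \<nu>)"
    using near[rule_format, of "\<eta> / 2"] by simp
  then obtain n0 \<epsilon>0 where "0 < \<epsilon>0" and small: "\<forall>M \<in> uncert (moment \<nu>) n0 \<epsilon>0. \<delta> \<nu> M \<le> \<eta> / 2"
    unfolding eventually_moment_filter by (auto intro: less_imp_le)
  have "eventually (\<lambda>n. n0 \<le> n \<and> \<epsilon> n < \<epsilon>0) sequentially"
    using eventually_ge_at_top order_tendstoD(2)[OF \<epsilon>(2) \<open>0 < \<epsilon>0\<close>]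
    by (rule eventually_conj)
  then show "eventually (\<lambda>n. diam_delta \<delta> (uncert (moment \<nu>) n (\<epsilon> n)) < a) sequentially"
  proof (rule eventually_mono)
    fix n
    assume "n0 \<le> n \<and> \<epsilon> n < \<epsilon>0"
    then have "diam_delta \<delta> (uncert (moment \<nu>) n (\<epsilon> n)) \<le> ereal (2 * (\<eta> / 2))"
      by (intro diam_uncert_le[OF \<delta> \<nu> small]) auto
    then show "diam_delta \<delta> (uncert (moment \<nu>) n (\<epsilon> n)) < a"
      using \<open>ereal \<eta> < a\<close> by simp
  qed
qed

lemma tendsto_diam_uncert_iff:
  assumes \<delta>: "metric_on_Meas \<delta>" and \<nu>: "\<nu> \<in> Meas"
  shows "(\<forall>\<epsilon> :: nat \<Rightarrow> real. (\<forall>n. \<epsilon> n > 0) \<and> \<epsilon> \<longlonglongrightarrow> 0 \<longrightarrow>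
            (\<lambda>n. diam_delta \<delta> (uncert (moment \<nu>) n (\<epsilon> n))) \<longlonglongrightarrow> 0) \<longleftrightarrow>
    (\<forall>\<eta>>0. eventually (\<lambda>M. \<delta> \<nu> M < \<eta>) (moment_filter \<nu>))"
proof (intro iffI allI impI)
  fix \<eta> :: real
  assume diam: "\<forall>\<epsilon> :: nat \<Rightarrow> real. (\<forall>n. \<epsilon> n > 0) \<and> \<epsilon> \<longlonglongrightarrow> 0 \<longrightarrow>
            (\<lambda>n. diam_delta \<delta> (uncert (moment \<nu>) n (\<epsilon> n))) \<longlonglongrightarrow> 0"
    and "0 < \<eta>"
  define \<epsilon> :: "nat \<Rightarrow> real" where "\<epsilon> n = inverse (real (Suc n))" for n
  have "(\<lambda>n. diam_delta \<delta> (uncert (moment \<nu>) n (\<epsilon> n))) \<longlonglongrightarrow> 0"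
    using diam LIMSEQ_inverse_real_of_nat by (simp add: \<epsilon>_def)
  moreover have "0 < ereal \<eta>"
    using \<open>0 < \<eta>\<close> by simp
  ultimately have "eventually (\<lambda>n. diam_delta \<delta> (uncert (moment \<nu>) n (\<epsilon> n)) < ereal \<eta>) sequentially"
    by (rule order_tendstoD)
  then obtain N where N: "diam_delta \<delta> (uncert (moment \<nu>) N (\<epsilon> N)) < ereal \<eta>"
    by (auto simp: eventually_sequentially)
  have \<nu>_mem: "\<nu> \<in> uncert (moment \<nu>) N (\<epsilon> N)"
    by (rule mem_uncert_moment_self[OF \<nu>]) (simp add: \<epsilon>_def)
  have "\<delta> \<nu> M < \<eta>" if "M \<in> uncert (moment \<nu>) N (\<epsilon> N)" for M
    using le_less_trans[OF diam_delta_ge[OF \<nu>_mem that] N] by simp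
  then show "eventually (\<lambda>M. \<delta> \<nu> M < \<eta>) (moment_filter \<nu>)"
    unfolding eventually_moment_filter by (intro exI[of _ N] exI[of _ "\<epsilon> N"]) (simp add: \<epsilon>_def)
next
  fix \<epsilon> :: "nat \<Rightarrow> real"
  assume near: "\<forall>\<eta>>0. eventually (\<lambda>M. \<delta> \<nu> M < \<eta>) (moment_filter \<nu>)"
    and \<epsilon>: "(\<forall>n. \<epsilon> n > 0) \<and> \<epsilon> \<longlonglongrightarrow> 0"
  show "(\<lambda>n. diam_delta \<delta> (uncert (moment \<nu>) n (\<epsilon> n))) \<longlonglongrightarrow> 0"
    by (rule tendsto_diam_uncert[OF \<delta> \<nu> near conjunct1[OF \<epsilon>] conjunct2[OF \<epsilon>]])
qed

theorem theorem1:
  fixes \<delta> :: "complex measure \<Rightarrow> complex measure \<Rightarrow> real"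
  assumes "metric_on_Meas \<delta>"
  shows "(\<forall>\<nu>\<in>Meas. \<forall>\<epsilon> :: nat \<Rightarrow> real. (\<forall>n. \<epsilon> n > 0) \<and> \<epsilon> \<longlonglongrightarrow> 0 \<longrightarrow>
            (\<lambda>n. diam_delta \<delta> (uncert (moment \<nu>) n (\<epsilon> n))) \<longlonglongrightarrow> 0)
         \<longleftrightarrow> weakly_continuous \<delta>"
proof -
  have "(\<forall>\<nu>\<in>Meas. \<forall>\<epsilon> :: nat \<Rightarrow> real. (\<forall>n. \<epsilon> n > 0) \<and> \<epsilon> \<longlonglongrightarrow> 0 \<longrightarrow>
            (\<lambda>n. diam_delta \<delta> (uncert (moment \<nu>) n (\<epsilon> n))) \<longlonglongrightarrow> 0) \<longleftrightarrow>
      (\<forall>\<nu>\<in>Meas. \<forall>\<eta>>0. eventually (\<lambda>M. \<delta> \<nu> M < \<eta>) (moment_filter \<nu>))"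
    by (rule ball_cong[OF refl]) (rule tendsto_diam_uncert_iff[OF assms])
  also have "\<dots> \<longleftrightarrow> (\<forall>\<nu>\<in>Meas. \<forall>\<eta>>0. eventually (\<lambda>M. \<delta> \<nu> M < \<eta>) (nhdsin weak_top \<nu>))"
    by (simp add: nhdsin_weak_top_eq_moment_filter)
  also have "\<dots> \<longleftrightarrow> weakly_continuous \<delta>"
    by (rule weakly_continuous_iff_eventually[OF assms, symmetric])
  finally show ?thesis .
qed

end
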